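(* Let $A_1$ and $A_2$ be simple and covering literals that are unifiable with a most general unifier $\sigma$. Then $A_1\sigma$ is simple.
   Context: A compound term is a term that is neither a variable nor a constant. $\mathrm{Var}(E)$ denotes the set of variables of $E$. A literal is simple if each argument is a variable, a constant, or a term $f(u_1,\dots,u_n)$ with each $u_i$ a variable or a constant. A literal is covering if every compound term $t$ occurring in it satisfies $\mathrm{Var}(t)$ equal to the set of variables of the literal. *)

theory Defs
  imports Main
begin

datatype ('f, 'v) trm = Var 'v | Fun 'f "('f, 'v) trm list"

text \<open>Literals: polarity, predicate symbol, argument list.\<close>
datatype ('p, 'f, 'v) lit = Lit bool 'p "('f, 'v) trm list"

fun vars_trm :: "('f, 'v) trm \<Rightarrow> 'v set" where
  "vars_trm (Var x) = {x}"
| "vars_trm (Fun f ts) = (\<Union>t \<in> set ts. vars_trm t)"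

fun args :: "('p, 'f, 'v) lit \<Rightarrow> ('f, 'v) trm list" where
  "args (Lit b p ts) = ts"

definition vars_lit :: "('p, 'f, 'v) lit \<Rightarrow> 'v set" where
  "vars_lit L = (\<Union>t \<in> set (args L). vars_trm t)"

fun subterms :: "('f, 'v) trm \<Rightarrow> ('f, 'v) trm set" where
  "subterms (Var x) = {Var x}"
| "subterms (Fun f ts) = insert (Fun f ts) (\<Union>t \<in> set ts. subterms t)"

definition subterms_lit :: "('p, 'f, 'v) lit \<Rightarrow> ('f, 'v) trm set" where
  "subterms_lit L = (\<Union>t \<in> set (args L). subterms t)"

definition is_var :: "('f, 'v) trm \<Rightarrow> bool" where
  "is_var t \<longleftrightarrow> (\<exists>x. t = Var x)"

definition is_const :: "('f, 'v) trm \<Rightarrow> bool" where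
  "is_const t \<longleftrightarrow> (\<exists>c. t = Fun c [])"

definition is_compound :: "('f, 'v) trm \<Rightarrow> bool" where
  "is_compound t \<longleftrightarrow> \<not> is_var t \<and> \<not> is_const t"

definition simple_lit :: "('p, 'f, 'v) lit \<Rightarrow> bool" where
  "simple_lit L \<longleftrightarrow> (\<forall>t \<in> set (args L).
      is_var t \<or> is_const t \<or>
      (\<exists>f us. t = Fun f us \<and> (\<forall>u \<in> set us. is_var u \<or> is_const u)))"

definition covering_lit :: "('p, 'f, 'v) lit \<Rightarrow> bool" where
  "covering_lit L \<longleftrightarrow> (\<forall>t \<in> subterms_lit L. is_compound t \<longrightarrow> vars_trm t = vars_lit L)"

type_synonym ('f, 'v) subst = "'v \<Rightarrow> ('f, 'v) trm"

fun subst_trm :: "('f, 'v) trm \<Rightarrow> ('f, 'v) subst \<Rightarrow> ('f, 'v) trm" where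
  "subst_trm (Var x) \<sigma> = \<sigma> x"
| "subst_trm (Fun f ts) \<sigma> = Fun f (map (\<lambda>t. subst_trm t \<sigma>) ts)"

fun subst_lit :: "('p, 'f, 'v) lit \<Rightarrow> ('f, 'v) subst \<Rightarrow> ('p, 'f, 'v) lit" where
  "subst_lit (Lit b p ts) \<sigma> = Lit b p (map (\<lambda>t. subst_trm t \<sigma>) ts)"

definition subst_comp :: "('f, 'v) subst \<Rightarrow> ('f, 'v) subst \<Rightarrow> ('f, 'v) subst" where
  "subst_comp \<sigma> \<delta> = (\<lambda>x. subst_trm (\<sigma> x) \<delta>)"

definition unifier :: "('p, 'f, 'v) lit \<Rightarrow> ('p, 'f, 'v) lit \<Rightarrow> ('f, 'v) subst \<Rightarrow> bool" where
  "unifier L1 L2 \<sigma> \<longleftrightarrow> subst_lit L1 \<sigma> = subst_lit L2 \<sigma>"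

definition mgu :: "('p, 'f, 'v) lit \<Rightarrow> ('p, 'f, 'v) lit \<Rightarrow> ('f, 'v) subst \<Rightarrow> bool" where
  "mgu L1 L2 \<sigma> \<longleftrightarrow> unifier L1 L2 \<sigma> \<and>
     (\<forall>\<theta>. unifier L1 L2 \<theta> \<longrightarrow> (\<exists>\<delta>. \<theta> = subst_comp \<sigma> \<delta>))"

end

theory Submission
  imports Defs
begin

text \<open>
  Suppose some argument \<open>h(\<dots>, r, \<dots>)\<close> of \<open>A\<^sub>1\<sigma>\<close> has a compound argument \<open>r\<close>. Since \<open>A\<^sub>1\<close> is
  simple, \<open>r\<close> occurs inside \<open>\<sigma> x\<close> for a variable \<open>x\<close> of \<open>A\<^sub>1\<close> (and likewise of \<open>A\<^sub>2\<close>). If \<open>r\<close> is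
  not the image \<open>t\<sigma>\<close> of a compound argument \<open>t\<close> of \<open>A\<^sub>1\<close> or \<open>A\<^sub>2\<close>, then replacing every
  occurrence of \<open>r\<close> in the range of \<open>\<sigma>\<close> by a variable yields a unifier that is strictly
  smaller than \<open>\<sigma>\<close>, so \<open>\<sigma>\<close> is not most general. If \<open>r = t\<sigma>\<close> with \<open>t\<close> compound, then by the
  covering property \<open>t\<close> contains every variable of its literal properly, so \<open>t\<sigma>\<close> is strictly
  larger than \<open>\<sigma> x\<close>, which contains \<open>r\<close>.
\<close>

lemma subst_trm_subst_comp: "subst_trm t (subst_comp \<sigma> \<delta>) = subst_trm (subst_trm t \<sigma>) \<delta>"
  by (induction t) (auto simp: subst_comp_def)

lemma args_subst_lit: "args (subst_lit A \<sigma>) = map (\<lambda>t. subst_trm t \<sigma>) (args A)"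
  by (cases A) auto

lemma size_trm_pos: "0 < size (t :: ('f, 'v) trm)"
  by (cases t) auto

lemma size_le_size_subst_trm: "size t \<le> size (subst_trm t \<delta>)"
proof (induction t)
  case (Fun f ts)
  then have "size_list size ts \<le> size_list (size \<circ> (\<lambda>t. subst_trm t \<delta>)) ts"
    by (intro size_list_pointwise) simp
  then show ?case by simp
qed (simp add: Suc_le_eq size_trm_pos)

lemma size_list_strict_mono_at:
  assumes "\<And>x. x \<in> set xs \<Longrightarrow> f x \<le> g x" and "u \<in> set xs" and "f u < g u"
  shows "size_list f xs < size_list g xs"
  using assms
proof (induction xs)
  case (Cons a xs)
  have "size_list f xs \<le> size_list g xs"
    using Cons.prems(1) by (intro size_list_pointwise) simp
  with Cons show ?case by fastforce
qed simp

lemma subterms_refl: "t \<in> subterms t"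
  by (cases t) auto

lemma size_subterm_le: "s \<in> subterms t \<Longrightarrow> size s \<le> size t"
proof (induction t)
  case (Fun f ts)
  show ?case
  proof (cases "s = Fun f ts")
    case False
    with Fun obtain u where "u \<in> set ts" "size s \<le> size u"
      by auto
    then have "size s \<le> size_list size ts"
      by (rule size_list_estimation')
    then show ?thesis by simp
  qed simp
qed simp

lemma var_subterm_subst_trm: "x \<in> vars_trm t \<Longrightarrow> \<sigma> x \<in> subterms (subst_trm t \<sigma>)"
  by (induction t) (auto simp: subterms_refl)

lemma compound_iff: "is_compound t \<longleftrightarrow> (\<exists>f u us. t = Fun f (u # us))"
  by (cases t) (auto simp: is_compound_def is_var_def is_const_def neq_Nil_conv)

lemma not_compoundE:
  assumes "\<not> is_compound t"
  obtains x where "t = Var x" | c where "t = Fun c []"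
  using assms by (auto simp: is_compound_def is_var_def is_const_def)

definition simple_trm :: "('f, 'v) trm \<Rightarrow> bool" where
  "simple_trm t \<longleftrightarrow> (\<forall>f us. t = Fun f us \<longrightarrow> (\<forall>u \<in> set us. \<not> is_compound u))"

lemma simple_lit_iff_simple_args:
  fixes L :: "('p, 'f, 'v) lit"
  shows "simple_lit L \<longleftrightarrow> (\<forall>t \<in> set (args L). simple_trm t)"
proof -
  have "is_var t \<or> is_const t \<or> (\<exists>f us. t = Fun f us \<and> (\<forall>u \<in> set us. is_var u \<or> is_const u))
      \<longleftrightarrow> simple_trm t" for t :: "('f, 'v) trm"
    by (cases t) (auto simp: simple_trm_def is_compound_def is_var_def is_const_def)
  then show ?thesis
    by (simp only: simple_lit_def)
qed

fun replace_subterm :: "('f, 'v) trm \<Rightarrow> 'v \<Rightarrow> ('f, 'v) trm \<Rightarrow> ('f, 'v) trm" where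
  "replace_subterm r z (Var x) = Var x"
| "replace_subterm r z (Fun f ts) =
     (if Fun f ts = r then Var z else Fun f (map (replace_subterm r z) ts))"

lemma size_replace_subterm_le: "size (replace_subterm r z t) \<le> size t"
proof (induction t)
  case (Fun f ts)
  then have "size_list (size \<circ> replace_subterm r z) ts \<le> size_list size ts"
    by (intro size_list_pointwise) simp
  then show ?case by simp
qed simp

lemma size_replace_subterm_less:
  "r \<in> subterms t \<Longrightarrow> is_compound r \<Longrightarrow> size (replace_subterm r z t) < size t"
proof (induction t)
  case (Var x)
  then show ?case by (simp add: compound_iff)
next
  case (Fun f ts)
  show ?case
  proof (cases "Fun f ts = r")
    case False
    with Fun.prems obtain u where "u \<in> set ts" "r \<in> subterms u"
      by auto
    with Fun have "size_list (size \<circ> replace_subterm r z) ts < size_list size ts"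
      by (intro size_list_strict_mono_at[of ts _ _ u]) (auto intro: size_replace_subterm_le)
    with False show ?thesis by simp
  qed (use Fun.prems in \<open>auto simp: compound_iff\<close>)
qed

text \<open>The only compound subterm of a simple term \<open>t\<close> that could be mapped onto \<open>r\<close> is \<open>t\<close>
  itself.\<close>
lemma subst_trm_replace_subterm:
  assumes "simple_trm t" and "is_compound r" and "is_compound t \<longrightarrow> subst_trm t \<sigma> \<noteq> r"
  shows "subst_trm t (\<lambda>x. replace_subterm r z (\<sigma> x)) = replace_subterm r z (subst_trm t \<sigma>)"
proof (cases t)
  case (Fun f us)
  have "subst_trm u (\<lambda>x. replace_subterm r z (\<sigma> x)) = replace_subterm r z (subst_trm u \<sigma>)"
    if "u \<in> set us" for u
  proof -
    from that assms(1) Fun have "\<not> is_compound u"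
      by (simp add: simple_trm_def)
    then show ?thesis
      using assms(2) by (elim not_compoundE) (auto simp: compound_iff)
  qed
  moreover have "Fun f (map (\<lambda>u. subst_trm u \<sigma>) us) \<noteq> r"
    using assms(2,3) Fun by (cases us) (auto simp: compound_iff)
  ultimately show ?thesis
    using Fun by simp
qed simp

text \<open>If \<open>r\<close> were no such instance, abstracting \<open>r\<close> to a variable would give a unifier strictly
  below \<open>\<sigma>\<close>; any variable will do, it need not be fresh.\<close>
lemma mgu_compound_subterm_is_instance:
  assumes "simple_lit A1" and "simple_lit A2" and "mgu A1 A2 \<sigma>"
    and "is_compound r" and "r \<in> subterms_lit (subst_lit A1 \<sigma>)"
  shows "\<exists>t \<in> set (args A1) \<union> set (args A2). is_compound t \<and> subst_trm t \<sigma> = r"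
proof (rule ccontr)
  assume no_instance: "\<not> ?thesis"
  define \<theta> where "\<theta> = (\<lambda>x. replace_subterm r undefined (\<sigma> x))"
  have replace_args: "subst_trm t \<theta> = replace_subterm r undefined (subst_trm t \<sigma>)"
    if "t \<in> set (args A1) \<union> set (args A2)" for t
    unfolding \<theta>_def using that no_instance assms(1,2,4)
    by (intro subst_trm_replace_subterm) (auto simp: simple_lit_iff_simple_args)
  have "subst_lit A1 \<sigma> = subst_lit A2 \<sigma>"
    using assms(3) by (simp add: mgu_def unifier_def)
  then obtain b p ts1 ts2 where A: "A1 = Lit b p ts1" "A2 = Lit b p ts2"
    and "map (\<lambda>t. subst_trm t \<sigma>) ts1 = map (\<lambda>t. subst_trm t \<sigma>) ts2"
    by (cases A1; cases A2) auto
  then have "map (replace_subterm r undefined) (map (\<lambda>t. subst_trm t \<sigma>) ts1)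
      = map (replace_subterm r undefined) (map (\<lambda>t. subst_trm t \<sigma>) ts2)"
    by simp
  then have "unifier A1 A2 \<theta>"
    using replace_args by (simp add: A unifier_def cong: map_cong)
  then obtain \<delta> where \<delta>: "\<theta> = subst_comp \<sigma> \<delta>"
    using assms(3) by (auto simp: mgu_def)
  from assms(5) obtain t where t: "t \<in> set (args A1)" "r \<in> subterms (subst_trm t \<sigma>)"
    by (auto simp: subterms_lit_def args_subst_lit)
  have "size (subst_trm t \<sigma>) \<le> size (subst_trm (subst_trm t \<sigma>) \<delta>)"
    by (rule size_le_size_subst_trm)
  also have "\<dots> = size (replace_subterm r undefined (subst_trm t \<sigma>))"
    using replace_args[of t] t(1) by (simp add: \<delta> subst_trm_subst_comp)
  also have "\<dots> < size (subst_trm t \<sigma>)"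
    using t(2) assms(4) by (rule size_replace_subterm_less)
  finally show False by simp
qed

lemma simple_lit_compound_below_var:
  assumes "simple_lit A" and "Fun h cs \<in> set (args (subst_lit A \<sigma>))"
    and "c \<in> set cs" and "is_compound c"
  shows "\<exists>x \<in> vars_lit A. c \<in> subterms (\<sigma> x)"
proof -
  from assms(2) obtain t where t: "t \<in> set (args A)" "subst_trm t \<sigma> = Fun h cs"
    by (auto simp: args_subst_lit)
  then have "simple_trm t"
    using assms(1) by (simp add: simple_lit_iff_simple_args)
  have vars: "vars_trm t \<subseteq> vars_lit A"
    using t(1) by (auto simp: vars_lit_def)
  show ?thesis
  proof (cases t)
    case (Var x)
    then have "c \<in> subterms (\<sigma> x)"
      using t(2) assms(3) subterms_refl[of c] by auto
    with Var vars show ?thesis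
      by auto
  next
    case (Fun f us)
    with t(2) assms(3) obtain u where u: "u \<in> set us" "c = subst_trm u \<sigma>"
      by auto
    moreover have "\<not> is_compound u"
      using \<open>simple_trm t\<close> Fun u(1) by (simp add: simple_trm_def)
    ultimately obtain x where "u = Var x"
      using assms(4) by (elim not_compoundE) (auto simp: compound_iff)
    with Fun u(1) have "x \<in> vars_trm t"
      by force
    with vars u(2) \<open>u = Var x\<close> show ?thesis
      using subterms_refl by auto
  qed
qed

text \<open>Covering puts every variable of the literal strictly below the root of \<open>t\<close>.\<close>
lemma covering_lit_size_less:
  assumes "covering_lit A" and "t \<in> set (args A)" and "is_compound t" and "x \<in> vars_lit A"
  shows "size (\<sigma> x) < size (subst_trm t \<sigma>)"
proof -
  have "vars_trm t = vars_lit A"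
    using assms(1-3) subterms_refl[of t] by (auto simp: covering_lit_def subterms_lit_def)
  moreover obtain f us where "t = Fun f us"
    using assms(3) by (auto simp: compound_iff)
  ultimately obtain u where u: "u \<in> set us" "x \<in> vars_trm u"
    using assms(4) by auto
  have "size (\<sigma> x) \<le> size (subst_trm u \<sigma>)"
    using u(2) by (intro size_subterm_le var_subterm_subst_trm)
  also have "\<dots> < size (subst_trm t \<sigma>)"
    using \<open>t = Fun f us\<close> u(1) by (auto simp: less_Suc_eq_le intro: size_list_estimation')
  finally show ?thesis .
qed

theorem mainTheorem6:
  fixes A1 A2 :: "('p, 'f, 'v) lit" and \<sigma> :: "('f, 'v) subst"
  assumes "simple_lit A1" and "covering_lit A1"
    and "simple_lit A2" and "covering_lit A2"
    and "mgu A1 A2 \<sigma>"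
  shows "simple_lit (subst_lit A1 \<sigma>)"
proof (rule ccontr)
  assume "\<not> simple_lit (subst_lit A1 \<sigma>)"
  then obtain h cs r where arg: "Fun h cs \<in> set (args (subst_lit A1 \<sigma>))"
    and r: "r \<in> set cs" "is_compound r"
    unfolding simple_lit_iff_simple_args simple_trm_def by blast
  have "r \<in> subterms (Fun h cs)"
    using r(1) subterms_refl by auto
  with arg have "r \<in> subterms_lit (subst_lit A1 \<sigma>)"
    unfolding subterms_lit_def by blast
  from mgu_compound_subterm_is_instance[OF assms(1,3,5) r(2) this]
  obtain A t where A: "A \<in> {A1, A2}" and t: "t \<in> set (args A)" "is_compound t"
    and r_eq: "subst_trm t \<sigma> = r"
    by blast
  have "subst_lit A1 \<sigma> = subst_lit A2 \<sigma>"
    using assms(5) by (simp add: mgu_def unifier_def)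
  with A arg have arg_A: "Fun h cs \<in> set (args (subst_lit A \<sigma>))"
    by auto
  from A assms have "simple_lit A" and "covering_lit A"
    by auto
  then obtain x where x: "x \<in> vars_lit A" "r \<in> subterms (\<sigma> x)"
    using simple_lit_compound_below_var[OF _ arg_A r] by blast
  have "size (\<sigma> x) < size r"
    using covering_lit_size_less[where \<sigma> = \<sigma>, OF \<open>covering_lit A\<close> t x(1)] r_eq by simp
  moreover have "size r \<le> size (\<sigma> x)"
    using x(2) by (rule size_subterm_le)
  ultimately show False by simp
qed

end
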